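(* Let $r\in\{0,1\}$ and let $k,l,a_1,a_2,C_1,C_2,a,b,c,b_1,c_1$ be real constants. Put $\alpha(t)=kt+l$, $X=x\cos\alpha+y\sin\alpha$, $Y=-x\sin\alpha+y\cos\alpha$, $\mathbf e_1=(\cos\alpha,\sin\alpha,0)^t$, $\mathbf e_2=(-\sin\alpha,\cos\alpha,0)^t$, and define functions of $Y$: if $r=0$: $\phi=e^{a_1Y}-ae^{-a_1Y}$, $\psi=e^{a_1Y}+ae^{-a_1Y}$, $\xi=be^{a_1Y}-ce^{-a_1Y}$, $\zeta=be^{a_1Y}+ce^{-a_1Y}$, $\vartheta=b_1e^{a_1Y}-c_1e^{-a_1Y}$; if $r=1$: $\phi=\sin(a_1Y)$, $\psi=\cos(a_1Y)$, $\xi=c\sin(a_1Y+b)$, $\zeta=c\cos(a_1Y+b)$, $\vartheta=c_1\sin(a_1Y+b_1)$. Let $$W_1=a_1\big(\vartheta+a_2Y\phi-X\zeta-a_1a_2X^2\psi\big),\qquad W_2=\xi+2a_1a_2X\phi,$$ and $$\mathbf v=k(-y,x,0)^t+C_1e^{(-1)^r\nu a_1^2t}\big(W_1\mathbf e_1+W_2\mathbf e_2\big),\qquad \mathbf H=C_2e^{(-1)^r\eta a_1^2t}\big(W_1\mathbf e_1+W_2\mathbf e_2\big).$$ Then there exists a smooth function $p$ on $\mathbb R\times\mathbb R^3$ such that $(\mathbf v,\mathbf H,p)$ satisfies the MHD system on $\mathbb R\times\mathbb R^3$.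
   Context: Throughout, $\nu,\eta,\mu_0,\rho$ are positive constants. The MHD system for $\mathbf v=(u,v,w)^t$, $\mathbf H=(H^1,H^2,H^3)^t$, $p$, functions of $(t,x,y,z)$, is $$\nabla\cdot\mathbf v=0,\quad \mathbf v_t+(\mathbf v\cdot\nabla)\mathbf v-\mu_0(\mathbf H\times\operatorname{rot}\mathbf H)+\tfrac1\rho\nabla p=\nu\Delta\mathbf v,\quad \nabla\cdot\mathbf H=0,\quad \mathbf H_t=\operatorname{rot}(\mathbf v\times\mathbf H)+\eta\Delta\mathbf H,$$ with $\operatorname{rot}$ the curl and $\Delta$ the componentwise Laplacian in $(x,y,z)$. Here $X,Y,\mathbf e_1,\mathbf e_2$ depend on $t$ through $\alpha(t)=kt+l$. *)

theory Defs
  imports "HOL-Analysis.Analysis"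
begin

type_synonym sfield = "real \<Rightarrow> real \<Rightarrow> real \<Rightarrow> real \<Rightarrow> real"

definition d_t :: "sfield \<Rightarrow> sfield" where
  "d_t f = (\<lambda>t x y z. deriv (\<lambda>s. f s x y z) t)"
definition d_x :: "sfield \<Rightarrow> sfield" where
  "d_x f = (\<lambda>t x y z. deriv (\<lambda>s. f t s y z) x)"
definition d_y :: "sfield \<Rightarrow> sfield" where
  "d_y f = (\<lambda>t x y z. deriv (\<lambda>s. f t x s z) y)"
definition d_z :: "sfield \<Rightarrow> sfield" where
  "d_z f = (\<lambda>t x y z. deriv (\<lambda>s. f t x y s) z)"

definition pd :: "nat \<Rightarrow> sfield \<Rightarrow> sfield" where
  "pd i = (if i = 0 then d_t else if i = 1 then d_x else if i = 2 then d_y else d_z)"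

definition pd_exists :: "nat \<Rightarrow> sfield \<Rightarrow> bool" where
  "pd_exists i f \<longleftrightarrow> (\<forall>t x y z.
     (if i = 0 then (\<lambda>s. f s x y z) differentiable (at t)
      else if i = 1 then (\<lambda>s. f t s y z) differentiable (at x)
      else if i = 2 then (\<lambda>s. f t x s z) differentiable (at y)
      else (\<lambda>s. f t x y s) differentiable (at z)))"

definition smooth4 :: "sfield \<Rightarrow> bool" where
  "smooth4 f \<longleftrightarrow> (\<forall>ds. set ds \<subseteq> {0..3} \<longrightarrow>
     (let g = foldr pd ds f in
        continuous_on UNIV (\<lambda>(t::real, x::real, y::real, z::real). g t x y z) \<and>
        (\<forall>i\<in>{0..3}. pd_exists i g)))"

definition lap :: "sfield \<Rightarrow> sfield" where
  "lap f = (\<lambda>t x y z. d_x (d_x f) t x y z + d_y (d_y f) t x y z + d_z (d_z f) t x y z)"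

definition MHD :: "real \<Rightarrow> real \<Rightarrow> real \<Rightarrow> real \<Rightarrow> sfield \<Rightarrow> sfield \<Rightarrow> sfield \<Rightarrow>
    sfield \<Rightarrow> sfield \<Rightarrow> sfield \<Rightarrow> sfield \<Rightarrow> bool" where
  "MHD \<nu> \<eta> \<mu>0 \<rho> u v w H1 H2 H3 p \<longleftrightarrow> (\<forall>t x y z.
     let R1 = d_y H3 t x y z - d_z H2 t x y z;
         R2 = d_z H1 t x y z - d_x H3 t x y z;
         R3 = d_x H2 t x y z - d_y H1 t x y z;
         E1 = (\<lambda>t x y z. v t x y z * H3 t x y z - w t x y z * H2 t x y z);
         E2 = (\<lambda>t x y z. w t x y z * H1 t x y z - u t x y z * H3 t x y z);
         E3 = (\<lambda>t x y z. u t x y z * H2 t x y z - v t x y z * H1 t x y z);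
         conv = (\<lambda>f. u t x y z * d_x f t x y z + v t x y z * d_y f t x y z
                       + w t x y z * d_z f t x y z)
     in d_x u t x y z + d_y v t x y z + d_z w t x y z = 0
      \<and> d_t u t x y z + conv u
          - \<mu>0 * (H2 t x y z * R3 - H3 t x y z * R2) + d_x p t x y z / \<rho>
          = \<nu> * lap u t x y z
      \<and> d_t v t x y z + conv v
          - \<mu>0 * (H3 t x y z * R1 - H1 t x y z * R3) + d_y p t x y z / \<rho>
          = \<nu> * lap v t x y z
      \<and> d_t w t x y z + conv w
          - \<mu>0 * (H1 t x y z * R2 - H2 t x y z * R1) + d_z p t x y z / \<rho>
          = \<nu> * lap w t x y z
      \<and> d_x H1 t x y z + d_y H2 t x y z + d_z H3 t x y z = 0
      \<and> d_t H1 t x y z = d_y E3 t x y z - d_z E2 t x y z + \<eta> * lap H1 t x y z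
      \<and> d_t H2 t x y z = d_z E1 t x y z - d_x E3 t x y z + \<eta> * lap H2 t x y z
      \<and> d_t H3 t x y z = d_x E2 t x y z - d_y E1 t x y z + \<eta> * lap H3 t x y z)"

definition alpha :: "real \<Rightarrow> real \<Rightarrow> real \<Rightarrow> real" where
  "alpha k l t = k * t + l"
definition bigX :: "real \<Rightarrow> real \<Rightarrow> real \<Rightarrow> real \<Rightarrow> real \<Rightarrow> real" where
  "bigX k l t x y = x * cos (alpha k l t) + y * sin (alpha k l t)"
definition bigY :: "real \<Rightarrow> real \<Rightarrow> real \<Rightarrow> real \<Rightarrow> real \<Rightarrow> real" where
  "bigY k l t x y = - x * sin (alpha k l t) + y * cos (alpha k l t)"

definition phi :: "nat \<Rightarrow> real \<Rightarrow> real \<Rightarrow> real \<Rightarrow> real" where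
  "phi r a1 a Y = (if r = 0 then exp (a1 * Y) - a * exp (- a1 * Y) else sin (a1 * Y))"
definition psi :: "nat \<Rightarrow> real \<Rightarrow> real \<Rightarrow> real \<Rightarrow> real" where
  "psi r a1 a Y = (if r = 0 then exp (a1 * Y) + a * exp (- a1 * Y) else cos (a1 * Y))"
definition xi :: "nat \<Rightarrow> real \<Rightarrow> real \<Rightarrow> real \<Rightarrow> real \<Rightarrow> real" where
  "xi r a1 b c Y = (if r = 0 then b * exp (a1 * Y) - c * exp (- a1 * Y) else c * sin (a1 * Y + b))"
definition zeta :: "nat \<Rightarrow> real \<Rightarrow> real \<Rightarrow> real \<Rightarrow> real \<Rightarrow> real" where
  "zeta r a1 b c Y = (if r = 0 then b * exp (a1 * Y) + c * exp (- a1 * Y) else c * cos (a1 * Y + b))"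
definition vtheta :: "nat \<Rightarrow> real \<Rightarrow> real \<Rightarrow> real \<Rightarrow> real \<Rightarrow> real" where
  "vtheta r a1 b1 c1 Y = (if r = 0 then b1 * exp (a1 * Y) - c1 * exp (- a1 * Y) else c1 * sin (a1 * Y + b1))"

definition W1 :: "nat \<Rightarrow> real \<Rightarrow> real \<Rightarrow> real \<Rightarrow> real \<Rightarrow> real \<Rightarrow> real \<Rightarrow> real \<Rightarrow> real \<Rightarrow> real \<Rightarrow> real" where
  "W1 r a1 a2 a b c b1 c1 X Y = a1 * (vtheta r a1 b1 c1 Y + a2 * Y * phi r a1 a Y
      - X * zeta r a1 b c Y - a1 * a2 * X\<^sup>2 * psi r a1 a Y)"
definition W2 :: "nat \<Rightarrow> real \<Rightarrow> real \<Rightarrow> real \<Rightarrow> real \<Rightarrow> real \<Rightarrow> real \<Rightarrow> real \<Rightarrow> real" where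
  "W2 r a1 a2 a b c X Y = xi r a1 b c Y + 2 * a1 * a2 * X * phi r a1 a Y"

end

theory Submission
  imports Defs
begin

text \<open>
  The velocity and magnetic fields of the theorem are a rigid rotation k(-y, x, 0) plus time
  dependent multiples of the planar profile w = (W1, W2), written in the co-rotating coordinates
  (X, Y) and rotated back by the angle alpha(t).  The proof separates the special profile from
  the structure that makes the construction work: for ANY planar profile w which
    (i)   is divergence free,
    (ii)  has both components eigenfunctions of the planar Laplacian for one eigenvalue lam, and
    (iii) has curl equal to -lam S, where S is a stream function of w (S_X = -W2, S_Y = W1),
  the rotating fields with time factors exp(nu lam t), exp(eta lam t) solve the MHD system with an
  explicit pressure built from x^2 + y^2, S and |w|^2 (locales planar_profile and
  rotating_solution).  After rewriting all derivatives by the chain rule, each MHD equation is a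
  polynomial identity modulo (i), (iii) and cos^2 + sin^2 = 1.
\<close>

subsection \<open>Elementary fields are smooth\<close>

text \<open>The coordinate of index i, and the restriction of a field to the line through (t, x, y, z)
  in direction i; indices \<open>\<ge> 3\<close> all denote z, as in the definition of pd.\<close>

definition coord :: "nat \<Rightarrow> sfield" where
  "coord i t x y z = (if i = 0 then t else if i = 1 then x else if i = 2 then y else z)"

definition slice :: "nat \<Rightarrow> sfield \<Rightarrow> real \<Rightarrow> real \<Rightarrow> real \<Rightarrow> real \<Rightarrow> real \<Rightarrow> real" where
  "slice i f t x y z = (\<lambda>s. if i = 0 then f s x y z else if i = 1 then f t s y z
      else if i = 2 then f t x s z else f t x y s)"

lemma pd_eq_deriv_slice: "pd i f t x y z = deriv (slice i f t x y z) (coord i t x y z)"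
  unfolding pd_def slice_def coord_def d_t_def d_x_def d_y_def d_z_def by auto

lemma pd_exists_iff_slice:
  "pd_exists i f \<longleftrightarrow> (\<forall>t x y z. slice i f t x y z differentiable (at (coord i t x y z)))"
  unfolding pd_exists_def slice_def coord_def by auto

lemma slice_at_coord: "slice i f t x y z (coord i t x y z) = f t x y z"
  unfolding slice_def coord_def by auto

lemma pd_unique:
  assumes "\<And>t x y z. (slice i f t x y z has_real_derivative D t x y z) (at (coord i t x y z))"
  shows "pd i f = D"
  using assms by (intro ext) (simp add: pd_eq_deriv_slice DERIV_imp_deriv)

lemma slice_coord_derivative:
  "(slice i (coord j) t x y z has_real_derivative (if min i 3 = min j 3 then 1 else 0))
     (at (coord i t x y z))"
  by (cases "i = 0"; cases "i = 1"; cases "i = 2"; cases "j = 0"; cases "j = 1"; cases "j = 2")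
     (auto simp: slice_def coord_def intro!: derivative_eq_intros)

lemma slice_compose:
  assumes h: "\<And>v. (h has_real_derivative h' v) (at v)"
    and f: "(slice i f t x y z has_real_derivative D) (at (coord i t x y z))"
  shows "(slice i (\<lambda>t x y z. h (f t x y z)) t x y z has_real_derivative h' (f t x y z) * D)
           (at (coord i t x y z))"
proof -
  have "slice i (\<lambda>t x y z. h (f t x y z)) t x y z = (\<lambda>s. h (slice i f t x y z s))"
    unfolding slice_def by auto
  then show ?thesis
    using DERIV_chain2[OF h f] by (simp add: slice_at_coord)
qed

lemma slice_add:
  assumes f: "(slice i f t x y z has_real_derivative Df) (at (coord i t x y z))"
    and g: "(slice i g t x y z has_real_derivative Dg) (at (coord i t x y z))"
  shows "(slice i (\<lambda>t x y z. f t x y z + g t x y z) t x y z has_real_derivative Df + Dg)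
           (at (coord i t x y z))"
proof -
  have "slice i (\<lambda>t x y z. f t x y z + g t x y z) t x y z
      = (\<lambda>s. slice i f t x y z s + slice i g t x y z s)"
    unfolding slice_def by auto
  then show ?thesis
    using DERIV_add[OF f g] by simp
qed

lemma slice_mult:
  assumes f: "(slice i f t x y z has_real_derivative Df) (at (coord i t x y z))"
    and g: "(slice i g t x y z has_real_derivative Dg) (at (coord i t x y z))"
  shows "(slice i (\<lambda>t x y z. f t x y z * g t x y z) t x y z has_real_derivative
           Df * g t x y z + Dg * f t x y z) (at (coord i t x y z))"
proof -
  have "slice i (\<lambda>t x y z. f t x y z * g t x y z) t x y z
      = (\<lambda>s. slice i f t x y z s * slice i g t x y z s)"
    unfolding slice_def by auto
  then show ?thesis
    using DERIV_mult[OF f g] by (simp add: slice_at_coord)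
qed

text \<open>Elementary fields: built from constants and coordinates by sums, products, exp, sin and
  cos.  Every field occurring in the theorem is of this form.\<close>
inductive_set elementary :: "sfield set" where
  const: "(\<lambda>t x y z. a) \<in> elementary"
| coord: "coord j \<in> elementary"
| add: "f \<in> elementary \<Longrightarrow> g \<in> elementary \<Longrightarrow> (\<lambda>t x y z. f t x y z + g t x y z) \<in> elementary"
| mult: "f \<in> elementary \<Longrightarrow> g \<in> elementary \<Longrightarrow> (\<lambda>t x y z. f t x y z * g t x y z) \<in> elementary"
| exp: "f \<in> elementary \<Longrightarrow> (\<lambda>t x y z. exp (f t x y z)) \<in> elementary"
| sin: "f \<in> elementary \<Longrightarrow> (\<lambda>t x y z. sin (f t x y z)) \<in> elementary"
| cos: "f \<in> elementary \<Longrightarrow> (\<lambda>t x y z. cos (f t x y z)) \<in> elementary"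

lemma elementary_coords:
  "(\<lambda>t x y z. t) \<in> elementary" "(\<lambda>t x y z. x) \<in> elementary"
  "(\<lambda>t x y z. y) \<in> elementary" "(\<lambda>t x y z. z) \<in> elementary"
  using elementary.coord[of 0] elementary.coord[of 1] elementary.coord[of 2] elementary.coord[of 3]
  by (simp_all add: coord_def[abs_def])

lemma elementary_minus: "f \<in> elementary \<Longrightarrow> (\<lambda>t x y z. - f t x y z) \<in> elementary"
  using elementary.mult[OF elementary.const[of "-1"]] by force

lemma elementary_diff:
  "f \<in> elementary \<Longrightarrow> g \<in> elementary \<Longrightarrow> (\<lambda>t x y z. f t x y z - g t x y z) \<in> elementary"
  using elementary.add[OF _ elementary_minus] by force

lemma elementary_divide: "f \<in> elementary \<Longrightarrow> (\<lambda>t x y z. f t x y z / a) \<in> elementary"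
  using elementary.mult[OF _ elementary.const[of "1 / a"]] by force

lemma elementary_power: "f \<in> elementary \<Longrightarrow> (\<lambda>t x y z. f t x y z ^ n) \<in> elementary"
  by (induction n) (auto intro: elementary.intros)

lemma elementary_if:
  "f \<in> elementary \<Longrightarrow> g \<in> elementary \<Longrightarrow>
    (\<lambda>t x y z. if P then f t x y z else g t x y z) \<in> elementary"
  by (cases P) simp_all

lemmas elementary_intros = elementary.intros elementary_coords elementary_minus elementary_diff
  elementary_divide elementary_power elementary_if


lemma elementary_partials:
  assumes "f \<in> elementary"
  shows "(\<forall>i t x y z. (slice i f t x y z has_real_derivative pd i f t x y z) (at (coord i t x y z)))
         \<and> (\<forall>i. pd i f \<in> elementary)"
  using assms
proof induction
  case (const a)
  have "(slice i (\<lambda>t x y z. a) t x y z has_real_derivative 0) (at (coord i t x y z))" for i t x y z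
    by (simp add: slice_def)
  moreover from this have "pd i (\<lambda>t x y z. a) = (\<lambda>t x y z. 0)" for i
    by (rule pd_unique)
  ultimately show ?case by (simp add: elementary.const)
next
  case (coord j)
  have "pd i (coord j) = (\<lambda>t x y z. if min i 3 = min j 3 then 1 else 0)" for i
    by (rule pd_unique) (rule slice_coord_derivative)
  then show ?case using slice_coord_derivative by (simp add: elementary.const)
next
  case (add f g)
  have D: "(slice i (\<lambda>t x y z. f t x y z + g t x y z) t x y z has_real_derivative
      pd i f t x y z + pd i g t x y z) (at (coord i t x y z))" for i t x y z
    using add.IH by (blast intro: slice_add)
  have "pd i (\<lambda>t x y z. f t x y z + g t x y z) = (\<lambda>t x y z. pd i f t x y z + pd i g t x y z)" for i
    by (rule pd_unique) (rule D)
  then show ?case using D add.IH by (simp add: elementary.add)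
next
  case (mult f g)
  have D: "(slice i (\<lambda>t x y z. f t x y z * g t x y z) t x y z has_real_derivative
      pd i f t x y z * g t x y z + pd i g t x y z * f t x y z) (at (coord i t x y z))" for i t x y z
    using mult.IH by (blast intro: slice_mult)
  have "pd i (\<lambda>t x y z. f t x y z * g t x y z)
      = (\<lambda>t x y z. pd i f t x y z * g t x y z + pd i g t x y z * f t x y z)" for i
    by (rule pd_unique) (rule D)
  then show ?case using D mult by (simp add: elementary.add elementary.mult)
next
  case (exp f)
  have D: "(slice i (\<lambda>t x y z. exp (f t x y z)) t x y z has_real_derivative
      exp (f t x y z) * pd i f t x y z) (at (coord i t x y z))" for i t x y z
    using exp.IH by (blast intro: slice_compose DERIV_exp)
  have "pd i (\<lambda>t x y z. exp (f t x y z)) = (\<lambda>t x y z. exp (f t x y z) * pd i f t x y z)" for i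
    by (rule pd_unique) (rule D)
  then show ?case using D exp by (simp add: elementary.exp elementary.mult)
next
  case (sin f)
  have D: "(slice i (\<lambda>t x y z. sin (f t x y z)) t x y z has_real_derivative
      cos (f t x y z) * pd i f t x y z) (at (coord i t x y z))" for i t x y z
    using sin.IH by (blast intro: slice_compose DERIV_sin)
  have "pd i (\<lambda>t x y z. sin (f t x y z)) = (\<lambda>t x y z. cos (f t x y z) * pd i f t x y z)" for i
    by (rule pd_unique) (rule D)
  then show ?case using D sin by (simp add: elementary.cos elementary.mult)
next
  case (cos f)
  have D: "(slice i (\<lambda>t x y z. cos (f t x y z)) t x y z has_real_derivative
      - sin (f t x y z) * pd i f t x y z) (at (coord i t x y z))" for i t x y z
    using cos.IH slice_compose[OF DERIV_cos] by blast
  have "pd i (\<lambda>t x y z. cos (f t x y z)) = (\<lambda>t x y z. - sin (f t x y z) * pd i f t x y z)" for i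
    by (rule pd_unique) (rule D)
  moreover have "(\<lambda>t x y z. - sin (f t x y z) * pd i f t x y z) \<in> elementary" for i
    using cos by (simp add: elementary.mult elementary.sin elementary_minus)
  ultimately show ?case using D by simp
qed

lemma elementary_continuous:
  assumes "f \<in> elementary"
  shows "continuous_on UNIV (\<lambda>(t::real, x::real, y::real, z::real). f t x y z)"
  using assms
proof induction
  case (coord j)
  show ?case
    by (cases "j = 0"; cases "j = 1"; cases "j = 2")
       (auto simp: coord_def case_prod_beta intro!: continuous_intros)
qed (auto simp: case_prod_beta intro!: continuous_intros)

theorem elementary_smooth:
  assumes "f \<in> elementary"
  shows "smooth4 f"
proof -
  have iterated: "foldr pd ds f \<in> elementary" for ds
    by (induction ds) (use assms elementary_partials in auto)
  show ?thesis unfolding smooth4_def Let_def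
  proof (intro allI impI conjI ballI)
    fix ds :: "nat list" and i :: nat
    show "continuous_on UNIV (\<lambda>(t, x, y, z). foldr pd ds f t x y z)"
      using elementary_continuous[OF iterated] .
    show "pd_exists i (foldr pd ds f)"
      unfolding pd_exists_iff_slice
      using elementary_partials[OF iterated[of ds]] real_differentiable_def by blast
  qed
qed

subsection \<open>Calculus in co-rotating coordinates\<close>

definition has_partials ::
    "(real \<Rightarrow> real \<Rightarrow> real) \<Rightarrow> (real \<Rightarrow> real \<Rightarrow> real) \<Rightarrow> (real \<Rightarrow> real \<Rightarrow> real) \<Rightarrow> bool" where
  "has_partials G GX GY \<longleftrightarrow> (\<forall>X Y.
     ((\<lambda>q. G (fst q) (snd q)) has_derivative (\<lambda>h. GX X Y * fst h + GY X Y * snd h)) (at (X, Y)))"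

lemma has_partials_chain:
  assumes G: "has_partials G GX GY"
    and f: "((\<lambda>s. (f1 s, f2 s)) has_derivative (\<lambda>h. (h * d1, h * d2))) (at x)"
  shows "((\<lambda>s. G (f1 s) (f2 s)) has_real_derivative
           GX (f1 x) (f2 x) * d1 + GY (f1 x) (f2 x) * d2) (at x)"
proof -
  have "((\<lambda>q. G (fst q) (snd q)) has_derivative
      (\<lambda>h. GX (f1 x) (f2 x) * fst h + GY (f1 x) (f2 x) * snd h)) (at (f1 x, f2 x))"
    using G unfolding has_partials_def by blast
  from diff_chain_at[OF f this]
  have "((\<lambda>s. G (f1 s) (f2 s)) has_derivative
      (\<lambda>h. GX (f1 x) (f2 x) * (h * d1) + GY (f1 x) (f2 x) * (h * d2))) (at x)"
    by (simp add: o_def)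
  moreover have "(\<lambda>h. GX (f1 x) (f2 x) * (h * d1) + GY (f1 x) (f2 x) * (h * d2))
      = (*) (GX (f1 x) (f2 x) * d1 + GY (f1 x) (f2 x) * d2)"
    by (auto simp: fun_eq_iff algebra_simps)
  ultimately show ?thesis unfolding has_field_derivative_def by simp
qed

lemma alpha_deriv[derivative_intros]: "((\<lambda>s. alpha k l s) has_real_derivative k) (at t)"
  unfolding alpha_def by (rule derivative_eq_intros refl | simp)+

lemma corotating_dx: "((\<lambda>s. (bigX k l t s y, bigY k l t s y)) has_derivative
   (\<lambda>h. (h * cos (alpha k l t), h * (- sin (alpha k l t))))) (at x)"
  unfolding bigX_def bigY_def by (rule derivative_eq_intros refl | simp)+

lemma corotating_dy: "((\<lambda>s. (bigX k l t x s, bigY k l t x s)) has_derivative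
   (\<lambda>h. (h * sin (alpha k l t), h * cos (alpha k l t)))) (at y)"
  unfolding bigX_def bigY_def by (rule derivative_eq_intros refl | simp)+

lemma corotating_dt: "((\<lambda>s. (bigX k l s x y, bigY k l s x y)) has_derivative
   (\<lambda>h. (h * (k * bigY k l t x y), h * (- k * bigX k l t x y)))) (at t)"
  unfolding bigX_def bigY_def alpha_def
  by (rule derivative_eq_intros refl | simp)+ (auto simp: fun_eq_iff algebra_simps)

lemma corotating_inverse:
  "x = bigX k l t x y * cos (alpha k l t) - bigY k l t x y * sin (alpha k l t)"
  "y = bigX k l t x y * sin (alpha k l t) + bigY k l t x y * cos (alpha k l t)"
  unfolding bigX_def bigY_def
  by (simp_all add: algebra_simps flip: power2_eq_square distrib_left)

definition lift :: "real \<Rightarrow> real \<Rightarrow> (real \<Rightarrow> real \<Rightarrow> real) \<Rightarrow> real \<Rightarrow> real \<Rightarrow> real \<Rightarrow> real" where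
  "lift k l G t x y = G (bigX k l t x y) (bigY k l t x y)"

lemma lift_dx:
  assumes "has_partials G GX GY"
    and "D = lift k l GX t x y * cos (alpha k l t) - lift k l GY t x y * sin (alpha k l t)"
  shows "((\<lambda>s. lift k l G t s y) has_real_derivative D) (at x)"
  using has_partials_chain[OF assms(1) corotating_dx] assms(2) unfolding lift_def by simp

lemma lift_dy:
  assumes "has_partials G GX GY"
    and "D = lift k l GX t x y * sin (alpha k l t) + lift k l GY t x y * cos (alpha k l t)"
  shows "((\<lambda>s. lift k l G t x s) has_real_derivative D) (at y)"
  using has_partials_chain[OF assms(1) corotating_dy] assms(2) unfolding lift_def by simp

lemma lift_dt:
  assumes "has_partials G GX GY"
    and "D = k * (bigY k l t x y * lift k l GX t x y - bigX k l t x y * lift k l GY t x y)"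
  shows "((\<lambda>s. lift k l G s x y) has_real_derivative D) (at t)"
  using has_partials_chain[OF assms(1) corotating_dt] unfolding assms(2) lift_def
  by (simp add: algebra_simps)

subsection \<open>The general rotating solution\<close>

text \<open>A planar profile w = (w1, w2) on the (X, Y)-plane together with a stream function S and
  all partial derivatives up to order two (the mixed ones are given once, as they coincide):
  w is divergence free, its components are eigenfunctions of the Laplacian for the same
  eigenvalue lam, and its curl is -lam S.\<close>
locale planar_profile =
  fixes lam :: real
    and w1 w2 w1X w1Y w2X w2Y w1XX w1XY w1YY w2XX w2XY w2YY S :: "real \<Rightarrow> real \<Rightarrow> real"
  assumes w1_partials: "has_partials w1 w1X w1Y" and w2_partials: "has_partials w2 w2X w2Y"
    and w1X_partials: "has_partials w1X w1XX w1XY" and w1Y_partials: "has_partials w1Y w1XY w1YY"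
    and w2X_partials: "has_partials w2X w2XX w2XY" and w2Y_partials: "has_partials w2Y w2XY w2YY"
    and stream_partials: "has_partials S (\<lambda>X Y. - w2 X Y) w1"
    and divergence_free: "\<And>X Y. w1X X Y + w2Y X Y = 0"
    and eigen_w1: "\<And>X Y. w1XX X Y + w1YY X Y = lam * w1 X Y"
    and eigen_w2: "\<And>X Y. w2XX X Y + w2YY X Y = lam * w2 X Y"
    and curl_stream: "\<And>X Y. w2X X Y - w1Y X Y = - lam * S X Y"

locale rotating_solution = planar_profile +
  fixes k l C1 C2 \<nu> \<eta> \<mu>0 \<rho> :: real
  assumes rho_nonzero: "\<rho> \<noteq> 0"
begin

abbreviation "L G t x y \<equiv> lift k l G t x y"
abbreviation "c t \<equiv> cos (alpha k l t)"
abbreviation "sn t \<equiv> sin (alpha k l t)"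

abbreviation "dxL GX GY t x y \<equiv> L GX t x y * c t - L GY t x y * sn t"
abbreviation "dyL GX GY t x y \<equiv> L GX t x y * sn t + L GY t x y * c t"

lemmas lift_derivs =
  lift_dx[OF w1_partials] lift_dy[OF w1_partials] lift_dt[OF w1_partials]
  lift_dx[OF w2_partials] lift_dy[OF w2_partials] lift_dt[OF w2_partials]
  lift_dx[OF w1X_partials] lift_dy[OF w1X_partials] lift_dx[OF w1Y_partials] lift_dy[OF w1Y_partials]
  lift_dx[OF w2X_partials] lift_dy[OF w2X_partials] lift_dx[OF w2Y_partials] lift_dy[OF w2Y_partials]
  lift_dx[OF stream_partials] lift_dy[OF stream_partials]

definition "comp1 a b C q = (\<lambda>t x y z.
   a * x + b * y + C * exp (q * t) * (L w1 t x y * c t - L w2 t x y * sn t))"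
definition "comp2 a b C q = (\<lambda>t x y z.
   a * x + b * y + C * exp (q * t) * (L w1 t x y * sn t + L w2 t x y * c t))"

definition "comp1_dx a C q = (\<lambda>t x y z.
   a + C * exp (q * t) * (dxL w1X w1Y t x y * c t - dxL w2X w2Y t x y * sn t))"
definition "comp1_dy b C q = (\<lambda>t x y z.
   b + C * exp (q * t) * (dyL w1X w1Y t x y * c t - dyL w2X w2Y t x y * sn t))"
definition "comp2_dx a C q = (\<lambda>t x y z.
   a + C * exp (q * t) * (dxL w1X w1Y t x y * sn t + dxL w2X w2Y t x y * c t))"
definition "comp2_dy b C q = (\<lambda>t x y z.
   b + C * exp (q * t) * (dyL w1X w1Y t x y * sn t + dyL w2X w2Y t x y * c t))"

lemma comp1_has_dx:
  "D = comp1_dx a C q t x y z \<Longrightarrow> ((\<lambda>s. comp1 a b C q t s y z) has_real_derivative D) (at x)"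
  unfolding comp1_def comp1_dx_def
  by (rule derivative_eq_intros lift_derivs | rule refl)+ (simp add: algebra_simps)
lemma comp1_has_dy:
  "D = comp1_dy b C q t x y z \<Longrightarrow> ((\<lambda>s. comp1 a b C q t x s z) has_real_derivative D) (at y)"
  unfolding comp1_def comp1_dy_def
  by (rule derivative_eq_intros lift_derivs | rule refl)+ (simp add: algebra_simps)
lemma comp2_has_dx:
  "D = comp2_dx a C q t x y z \<Longrightarrow> ((\<lambda>s. comp2 a b C q t s y z) has_real_derivative D) (at x)"
  unfolding comp2_def comp2_dx_def
  by (rule derivative_eq_intros lift_derivs | rule refl)+ (simp add: algebra_simps)
lemma comp2_has_dy:
  "D = comp2_dy b C q t x y z \<Longrightarrow> ((\<lambda>s. comp2 a b C q t x s z) has_real_derivative D) (at y)"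
  unfolding comp2_def comp2_dy_def
  by (rule derivative_eq_intros lift_derivs | rule refl)+ (simp add: algebra_simps)

lemma d_x_comp1: "d_x (comp1 a b C q) = comp1_dx a C q"
  unfolding d_x_def by (intro ext DERIV_imp_deriv comp1_has_dx refl)
lemma d_y_comp1: "d_y (comp1 a b C q) = comp1_dy b C q"
  unfolding d_y_def by (intro ext DERIV_imp_deriv comp1_has_dy refl)
lemma d_x_comp2: "d_x (comp2 a b C q) = comp2_dx a C q"
  unfolding d_x_def by (intro ext DERIV_imp_deriv comp2_has_dx refl)
lemma d_y_comp2: "d_y (comp2 a b C q) = comp2_dy b C q"
  unfolding d_y_def by (intro ext DERIV_imp_deriv comp2_has_dy refl)
lemma d_z_comps: "d_z (comp1 a b C q) = (\<lambda>t x y z. 0)" "d_z (comp2 a b C q) = (\<lambda>t x y z. 0)"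
  unfolding d_z_def comp1_def comp2_def by simp_all

text \<open>Time derivatives: the exponential factor, the motion of the co-rotating coordinates
  (X_t = k Y, Y_t = -k X) and the rotation of the frame.\<close>
lemma d_t_comp1: "d_t (comp1 a b C q) = (\<lambda>t x y z. C * exp (q * t) *
    (q * (L w1 t x y * c t - L w2 t x y * sn t)
     + k * ((bigY k l t x y * L w1X t x y - bigX k l t x y * L w1Y t x y) * c t
          - (bigY k l t x y * L w2X t x y - bigX k l t x y * L w2Y t x y) * sn t
          - L w1 t x y * sn t - L w2 t x y * c t)))"
  unfolding d_t_def comp1_def
  by (intro ext DERIV_imp_deriv)
     ((rule derivative_eq_intros lift_derivs | rule refl)+, simp add: algebra_simps)
lemma d_t_comp2: "d_t (comp2 a b C q) = (\<lambda>t x y z. C * exp (q * t) *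
    (q * (L w1 t x y * sn t + L w2 t x y * c t)
     + k * ((bigY k l t x y * L w1X t x y - bigX k l t x y * L w1Y t x y) * sn t
          + (bigY k l t x y * L w2X t x y - bigX k l t x y * L w2Y t x y) * c t
          + L w1 t x y * c t - L w2 t x y * sn t)))"
  unfolding d_t_def comp2_def
  by (intro ext DERIV_imp_deriv)
     ((rule derivative_eq_intros lift_derivs | rule refl)+, simp add: algebra_simps)

lemma comp1_dx_has_dx: "((\<lambda>s. comp1_dx a C q t s y z) has_real_derivative
   C * exp (q * t) * ((dxL w1XX w1XY t x y * c t - dxL w1XY w1YY t x y * sn t) * c t
     - (dxL w2XX w2XY t x y * c t - dxL w2XY w2YY t x y * sn t) * sn t)) (at x)"
  unfolding comp1_dx_def
  by (rule derivative_eq_intros lift_derivs | rule refl)+ (simp add: algebra_simps)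
lemma comp1_dy_has_dy: "((\<lambda>s. comp1_dy b C q t x s z) has_real_derivative
   C * exp (q * t) * ((dyL w1XX w1XY t x y * sn t + dyL w1XY w1YY t x y * c t) * c t
     - (dyL w2XX w2XY t x y * sn t + dyL w2XY w2YY t x y * c t) * sn t)) (at y)"
  unfolding comp1_dy_def
  by (rule derivative_eq_intros lift_derivs | rule refl)+ (simp add: algebra_simps)
lemma comp2_dx_has_dx: "((\<lambda>s. comp2_dx a C q t s y z) has_real_derivative
   C * exp (q * t) * ((dxL w1XX w1XY t x y * c t - dxL w1XY w1YY t x y * sn t) * sn t
     + (dxL w2XX w2XY t x y * c t - dxL w2XY w2YY t x y * sn t) * c t)) (at x)"
  unfolding comp2_dx_def
  by (rule derivative_eq_intros lift_derivs | rule refl)+ (simp add: algebra_simps)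
lemma comp2_dy_has_dy: "((\<lambda>s. comp2_dy b C q t x s z) has_real_derivative
   C * exp (q * t) * ((dyL w1XX w1XY t x y * sn t + dyL w1XY w1YY t x y * c t) * sn t
     + (dyL w2XX w2XY t x y * sn t + dyL w2XY w2YY t x y * c t) * c t)) (at y)"
  unfolding comp2_dy_def
  by (rule derivative_eq_intros lift_derivs | rule refl)+ (simp add: algebra_simps)

lemma d_zero_field:
  "d_t (\<lambda>t x y z. 0) = (\<lambda>t x y z. 0)" "d_x (\<lambda>t x y z. 0) = (\<lambda>t x y z. 0)"
  "d_y (\<lambda>t x y z. 0) = (\<lambda>t x y z. 0)" "d_z (\<lambda>t x y z. 0) = (\<lambda>t x y z. 0)"
  "lap (\<lambda>t x y z. 0) = (\<lambda>t x y z. 0)"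
  unfolding d_t_def d_x_def d_y_def d_z_def lap_def by simp_all

text \<open>By rotation invariance of the Laplacian and (ii), lap acts on the rotated profile as
  multiplication by lam.\<close>
lemma lap_comp1:
  "lap (comp1 a b C q) t x y z = lam * C * exp (q * t) * (L w1 t x y * c t - L w2 t x y * sn t)"
proof -
  have "lap (comp1 a b C q) t x y z = d_x (comp1_dx a C q) t x y z + d_y (comp1_dy b C q) t x y z"
    unfolding lap_def d_x_comp1 d_y_comp1 d_z_comps d_zero_field by simp
  also have "\<dots> = lam * C * exp (q * t) * (L w1 t x y * c t - L w2 t x y * sn t)"
    unfolding d_x_def d_y_def
      DERIV_imp_deriv[OF comp1_dx_has_dx] DERIV_imp_deriv[OF comp1_dy_has_dy]
    using eigen_w1[of "bigX k l t x y" "bigY k l t x y"]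
      eigen_w2[of "bigX k l t x y" "bigY k l t x y"] sin_squared_eq[of "alpha k l t"]
    unfolding lift_def by algebra
  finally show ?thesis .
qed

lemma lap_comp2:
  "lap (comp2 a b C q) t x y z = lam * C * exp (q * t) * (L w1 t x y * sn t + L w2 t x y * c t)"
proof -
  have "lap (comp2 a b C q) t x y z = d_x (comp2_dx a C q) t x y z + d_y (comp2_dy b C q) t x y z"
    unfolding lap_def d_x_comp2 d_y_comp2 d_z_comps d_zero_field by simp
  also have "\<dots> = lam * C * exp (q * t) * (L w1 t x y * sn t + L w2 t x y * c t)"
    unfolding d_x_def d_y_def
      DERIV_imp_deriv[OF comp2_dx_has_dx] DERIV_imp_deriv[OF comp2_dy_has_dy]
    using eigen_w1[of "bigX k l t x y" "bigY k l t x y"]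
      eigen_w2[of "bigX k l t x y" "bigY k l t x y"] sin_squared_eq[of "alpha k l t"]
    unfolding lift_def by algebra
  finally show ?thesis .
qed

text \<open>The pressure: centrifugal part, coupling of rotation and stream function, and the
  quadratic terms of the profile.\<close>
definition "pressure = (\<lambda>t x y z. \<rho> * (k^2 * (x^2 + y^2) / 2
   - 2 * k * C1 * exp (\<nu> * lam * t) * L S t x y
   - C1^2 * exp (\<nu> * lam * t)^2 * ((L w1 t x y)^2 + (L w2 t x y)^2 - lam * (L S t x y)^2) / 2
   + \<mu>0 * C2^2 * exp (\<eta> * lam * t)^2 * lam * (L S t x y)^2 / 2))"

lemma d_x_pressure: "d_x pressure t x y z = \<rho> * (k^2 * x
   - 2 * k * C1 * exp (\<nu> * lam * t) * (- L w2 t x y * c t - L w1 t x y * sn t)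
   - C1^2 * exp (\<nu> * lam * t)^2 * (L w1 t x y * dxL w1X w1Y t x y + L w2 t x y * dxL w2X w2Y t x y
       - lam * L S t x y * (- L w2 t x y * c t - L w1 t x y * sn t))
   + \<mu>0 * C2^2 * exp (\<eta> * lam * t)^2 * lam * L S t x y * (- L w2 t x y * c t - L w1 t x y * sn t))"
  unfolding d_x_def pressure_def
  by (rule DERIV_imp_deriv)
     ((rule derivative_eq_intros lift_derivs | rule refl | simp)+,
      simp add: lift_def field_simps power2_eq_square)

lemma d_y_pressure: "d_y pressure t x y z = \<rho> * (k^2 * y
   - 2 * k * C1 * exp (\<nu> * lam * t) * (- L w2 t x y * sn t + L w1 t x y * c t)
   - C1^2 * exp (\<nu> * lam * t)^2 * (L w1 t x y * dyL w1X w1Y t x y + L w2 t x y * dyL w2X w2Y t x y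
       - lam * L S t x y * (- L w2 t x y * sn t + L w1 t x y * c t))
   + \<mu>0 * C2^2 * exp (\<eta> * lam * t)^2 * lam * L S t x y * (- L w2 t x y * sn t + L w1 t x y * c t))"
  unfolding d_y_def pressure_def
  by (rule DERIV_imp_deriv)
     ((rule derivative_eq_intros lift_derivs | rule refl | simp)+,
      simp add: lift_def field_simps power2_eq_square)

lemma d_z_pressure: "d_z pressure = (\<lambda>t x y z. 0)"
  unfolding d_z_def pressure_def by simp

abbreviation "vel1 \<equiv> comp1 0 (-k) C1 (\<nu> * lam)"
abbreviation "vel2 \<equiv> comp2 k 0 C1 (\<nu> * lam)"
abbreviation "mag1 \<equiv> comp1 0 0 C2 (\<eta> * lam)"
abbreviation "mag2 \<equiv> comp2 0 0 C2 (\<eta> * lam)"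

lemma divergence_comps:
  "d_x (comp1 a b C q) t x y z + d_y (comp2 a' b' C q) t x y z = a + b'"
  unfolding d_x_comp1 d_y_comp2 comp1_dx_def comp2_dy_def lift_def
  using divergence_free[of "bigX k l t x y" "bigY k l t x y"] sin_cos_squared_add[of "alpha k l t"]
  by algebra

lemma w2Y_eq: "w2Y X Y = - w1X X Y" using divergence_free[of X Y] by simp
lemma w1Y_eq: "w1Y X Y = w2X X Y + lam * S X Y" using curl_stream[of X Y] by simp

lemma momentum_x:
  "d_t vel1 t x y z + (vel1 t x y z * d_x vel1 t x y z + vel2 t x y z * d_y vel1 t x y z)
     - \<mu>0 * (mag2 t x y z * (d_x mag2 t x y z - d_y mag1 t x y z)) + d_x pressure t x y z / \<rho>
   = \<nu> * lap vel1 t x y z"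
  unfolding d_t_comp1 d_x_comp1 d_y_comp1 d_x_comp2 d_y_comp2 lap_comp1 d_x_pressure
    nonzero_mult_div_cancel_left[OF rho_nonzero]
  unfolding comp1_def comp2_def comp1_dx_def comp1_dy_def comp2_dx_def comp2_dy_def lift_def
    w2Y_eq w1Y_eq
  using corotating_inverse[where x=x and y=y and t=t and k=k and l=l]
    sin_cos_squared_add[of "alpha k l t"]
  by algebra

lemma momentum_y:
  "d_t vel2 t x y z + (vel1 t x y z * d_x vel2 t x y z + vel2 t x y z * d_y vel2 t x y z)
     + \<mu>0 * (mag1 t x y z * (d_x mag2 t x y z - d_y mag1 t x y z)) + d_y pressure t x y z / \<rho>
   = \<nu> * lap vel2 t x y z"
  unfolding d_t_comp2 d_x_comp1 d_y_comp1 d_x_comp2 d_y_comp2 lap_comp2 d_y_pressure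
    nonzero_mult_div_cancel_left[OF rho_nonzero]
  unfolding comp1_def comp2_def comp1_dx_def comp1_dy_def comp2_dx_def comp2_dy_def lift_def
    w2Y_eq w1Y_eq
  using corotating_inverse[where x=x and y=y and t=t and k=k and l=l]
    sin_cos_squared_add[of "alpha k l t"]
  by algebra

abbreviation "emf \<equiv> \<lambda>t x y z. vel1 t x y z * mag2 t x y z - vel2 t x y z * mag1 t x y z"

lemma d_x_emf: "d_x emf t x y z = d_x vel1 t x y z * mag2 t x y z + vel1 t x y z * d_x mag2 t x y z
    - (d_x vel2 t x y z * mag1 t x y z + vel2 t x y z * d_x mag1 t x y z)"
  unfolding d_x_comp1 d_x_comp2
  unfolding d_x_def
  by (rule DERIV_imp_deriv)
     ((rule derivative_eq_intros comp1_has_dx comp2_has_dx | rule refl)+, simp add: algebra_simps)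

lemma d_y_emf: "d_y emf t x y z = d_y vel1 t x y z * mag2 t x y z + vel1 t x y z * d_y mag2 t x y z
    - (d_y vel2 t x y z * mag1 t x y z + vel2 t x y z * d_y mag1 t x y z)"
  unfolding d_y_comp1 d_y_comp2
  unfolding d_y_def
  by (rule DERIV_imp_deriv)
     ((rule derivative_eq_intros comp1_has_dy comp2_has_dy | rule refl)+, simp add: algebra_simps)

lemma induction_x: "d_t mag1 t x y z = d_y emf t x y z + \<eta> * lap mag1 t x y z"
  unfolding d_y_emf d_t_comp1 d_y_comp1 d_y_comp2 lap_comp1
  unfolding comp1_def comp2_def comp1_dy_def comp2_dy_def lift_def w2Y_eq w1Y_eq
  using corotating_inverse[where x=x and y=y and t=t and k=k and l=l]
    sin_cos_squared_add[of "alpha k l t"]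
  by algebra

lemma induction_y: "d_t mag2 t x y z = \<eta> * lap mag2 t x y z - d_x emf t x y z"
  unfolding d_x_emf d_t_comp2 d_x_comp1 d_x_comp2 lap_comp2
  unfolding comp1_def comp2_def comp1_dx_def comp2_dx_def lift_def w2Y_eq w1Y_eq
  using corotating_inverse[where x=x and y=y and t=t and k=k and l=l]
    sin_cos_squared_add[of "alpha k l t"]
  by algebra

lemma pressure_elementary:
  assumes "(\<lambda>t x y z. L w1 t x y) \<in> elementary" "(\<lambda>t x y z. L w2 t x y) \<in> elementary"
    and "(\<lambda>t x y z. L S t x y) \<in> elementary"
  shows "pressure \<in> elementary"
  unfolding pressure_def by (intro elementary_intros assms)

theorem mhd_solution: "MHD \<nu> \<eta> \<mu>0 \<rho> vel1 vel2 (\<lambda>t x y z. 0) mag1 mag2 (\<lambda>t x y z. 0) pressure"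
  unfolding MHD_def Let_def
  by (simp add: d_zero_field d_z_comps d_z_pressure
      divergence_comps momentum_x momentum_y induction_x induction_y)

end

subsection \<open>The explicit profile\<close>

text \<open>sg r is the sign (-1)^r for r in {0, 1}; chi is the companion of vtheta in the same way
  as psi is of phi and zeta of xi: each is the derivative of the other up to a1 and sg r.\<close>
definition sg :: "nat \<Rightarrow> real" where
  "sg r = (if r = 0 then 1 else -1)"

definition chi :: "nat \<Rightarrow> real \<Rightarrow> real \<Rightarrow> real \<Rightarrow> real \<Rightarrow> real" where
  "chi r a1 b1 c1 Y =
     (if r = 0 then b1 * exp (a1 * Y) + c1 * exp (- a1 * Y) else c1 * cos (a1 * Y + b1))"

lemma sg_sg: "sg r * (sg r * v) = v"
  unfolding sg_def by simp

lemma phi_deriv: "(phi r a1 a has_real_derivative a1 * psi r a1 a Y) (at Y)"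
  unfolding phi_def psi_def
  by (cases "r = 0") (auto intro!: derivative_eq_intros simp: algebra_simps)
lemma psi_deriv: "(psi r a1 a has_real_derivative sg r * a1 * phi r a1 a Y) (at Y)"
  unfolding phi_def psi_def sg_def
  by (cases "r = 0") (auto intro!: derivative_eq_intros simp: algebra_simps)
lemma xi_deriv: "(xi r a1 b c has_real_derivative a1 * zeta r a1 b c Y) (at Y)"
  unfolding xi_def zeta_def
  by (cases "r = 0") (auto intro!: derivative_eq_intros simp: algebra_simps)
lemma zeta_deriv: "(zeta r a1 b c has_real_derivative sg r * a1 * xi r a1 b c Y) (at Y)"
  unfolding xi_def zeta_def sg_def
  by (cases "r = 0") (auto intro!: derivative_eq_intros simp: algebra_simps)
lemma vtheta_deriv: "(vtheta r a1 b1 c1 has_real_derivative a1 * chi r a1 b1 c1 Y) (at Y)"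
  unfolding vtheta_def chi_def
  by (cases "r = 0") (auto intro!: derivative_eq_intros simp: algebra_simps)
lemma chi_deriv: "(chi r a1 b1 c1 has_real_derivative sg r * a1 * vtheta r a1 b1 c1 Y) (at Y)"
  unfolding vtheta_def chi_def sg_def
  by (cases "r = 0") (auto intro!: derivative_eq_intros simp: algebra_simps)

lemmas profile_derivs_compose[derivative_intros] =
  phi_deriv[THEN DERIV_compose_FDERIV] psi_deriv[THEN DERIV_compose_FDERIV]
  xi_deriv[THEN DERIV_compose_FDERIV] zeta_deriv[THEN DERIV_compose_FDERIV]
  vtheta_deriv[THEN DERIV_compose_FDERIV] chi_deriv[THEN DERIV_compose_FDERIV]

definition stream_base :: "nat \<Rightarrow> real \<Rightarrow> real \<Rightarrow> real \<Rightarrow> real \<Rightarrow> real \<Rightarrow> real \<Rightarrow> real" where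
  "stream_base r a1 a2 a b1 c1 Y = (if a1 = 0 then 0
     else sg r * chi r a1 b1 c1 Y + sg r * a2 * (Y * psi r a1 a Y - phi r a1 a Y / a1))"

lemma stream_base_deriv:
  "(stream_base r a1 a2 a b1 c1 has_real_derivative
     a1 * vtheta r a1 b1 c1 Y + a1 * a2 * Y * phi r a1 a Y) (at Y)"
proof (cases "a1 = 0")
  case True
  then show ?thesis by (simp add: stream_base_def[abs_def])
next
  case False
  have "(stream_base r a1 a2 a b1 c1 has_real_derivative
      sg r * (sg r * a1 * vtheta r a1 b1 c1 Y)
      + sg r * a2 * (psi r a1 a Y + Y * (sg r * a1 * phi r a1 a Y) - a1 * psi r a1 a Y / a1))
     (at Y)"
    unfolding stream_base_def[abs_def] using False
    by (auto intro!: derivative_eq_intros chi_deriv psi_deriv phi_deriv)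
  then show ?thesis
    using False by (simp add: algebra_simps sg_sg)
qed

lemmas stream_base_deriv_compose[derivative_intros] = stream_base_deriv[THEN DERIV_compose_FDERIV]

context fixes r :: nat and a1 a2 a b c b1 c1 :: real begin

definition "q1 = (\<lambda>X Y. W1 r a1 a2 a b c b1 c1 X Y)"
definition "q1X = (\<lambda>X Y. - a1 * zeta r a1 b c Y - 2 * a1^2 * a2 * X * psi r a1 a Y)"
definition "q1Y = (\<lambda>X Y. a1^2 * chi r a1 b1 c1 Y + a1 * a2 * phi r a1 a Y
   + a1^2 * a2 * Y * psi r a1 a Y - sg r * a1^2 * X * xi r a1 b c Y
   - sg r * a1^3 * a2 * X^2 * phi r a1 a Y)"
definition "q1XX = (\<lambda>X Y. - 2 * a1^2 * a2 * psi r a1 a Y)"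
definition "q1XY = (\<lambda>X Y. - sg r * a1^2 * xi r a1 b c Y - 2 * sg r * a1^3 * a2 * X * phi r a1 a Y)"
definition "q1YY = (\<lambda>X Y. sg r * a1^3 * vtheta r a1 b1 c1 Y + 2 * a1^2 * a2 * psi r a1 a Y
   + sg r * a1^3 * a2 * Y * phi r a1 a Y - sg r * a1^3 * X * zeta r a1 b c Y
   - sg r * a1^4 * a2 * X^2 * psi r a1 a Y)"
definition "q2 = (\<lambda>X Y. W2 r a1 a2 a b c X Y)"
definition "q2X = (\<lambda>X Y. 2 * a1 * a2 * phi r a1 a Y)"
definition "q2Y = (\<lambda>X Y. a1 * zeta r a1 b c Y + 2 * a1^2 * a2 * X * psi r a1 a Y)"
definition "q2XY = (\<lambda>X Y. 2 * a1^2 * a2 * psi r a1 a Y)"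
definition "q2YY = (\<lambda>X Y. sg r * a1^2 * xi r a1 b c Y + 2 * sg r * a1^3 * a2 * X * phi r a1 a Y)"
definition "stream = (\<lambda>X Y.
   - X * xi r a1 b c Y - a1 * a2 * X^2 * phi r a1 a Y + stream_base r a1 a2 a b1 c1 Y)"

lemmas profile_defs = q1_def q1X_def q1Y_def q1XX_def q1XY_def q1YY_def
  q2_def q2X_def q2Y_def q2XY_def q2YY_def stream_def W1_def W2_def

lemma profile_partials:
  "has_partials q1 q1X q1Y" "has_partials q2 q2X q2Y"
  "has_partials q1X q1XX q1XY" "has_partials q1Y q1XY q1YY"
  "has_partials q2X (\<lambda>X Y. 0) q2XY" "has_partials q2Y q2XY q2YY"
  "has_partials stream (\<lambda>X Y. - q2 X Y) q1"
  unfolding has_partials_def profile_defs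
  by (intro allI; rule has_derivative_eq_rhs, (rule derivative_intros)+,
      simp add: fun_eq_iff algebra_simps power2_eq_square power3_eq_cube power4_eq_xxxx)+

lemma profile_divergence_free: "q1X X Y + q2Y X Y = 0"
  unfolding q1X_def q2Y_def by simp

lemma profile_eigen:
  "q1XX X Y + q1YY X Y = sg r * a1^2 * q1 X Y"
  "q2YY X Y = sg r * a1^2 * q2 X Y"
  unfolding profile_defs
  by (simp_all add: algebra_simps power2_eq_square power3_eq_cube power4_eq_xxxx)

lemma profile_curl: "q2X X Y - q1Y X Y = - (sg r * a1^2) * stream X Y"
proof (cases "a1 = 0")
  case True
  then show ?thesis unfolding q2X_def q1Y_def stream_def by simp
next
  case False
  then show ?thesis
    unfolding q2X_def q1Y_def stream_def stream_base_def
    by (simp add: field_simps power2_eq_square power3_eq_cube sg_sg)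
qed

lemma explicit_profile_lifts_elementary:
  "(\<lambda>t x y z. lift k l q1 t x y) \<in> elementary" "(\<lambda>t x y z. lift k l q2 t x y) \<in> elementary"
  "(\<lambda>t x y z. lift k l stream t x y) \<in> elementary"
  unfolding lift_def q1_def q2_def stream_def stream_base_def W1_def W2_def
    phi_def psi_def xi_def zeta_def vtheta_def chi_def sg_def bigX_def bigY_def alpha_def
  by (intro elementary_intros)+

lemma explicit_planar_profile:
  "planar_profile (sg r * a1^2) q1 q2 q1X q1Y q2X q2Y q1XX q1XY q1YY (\<lambda>X Y. 0) q2XY q2YY stream"
  using profile_partials profile_divergence_free profile_eigen profile_curl
  by unfold_locales auto

lemma explicit_solution:
  fixes k l C1 C2 \<nu> \<eta> \<mu>0 \<rho> :: real
  assumes "\<rho> \<noteq> 0"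
  defines "E \<equiv> \<lambda>\<kappa> t. exp (sg r * \<kappa> * a1^2 * t)"
  shows "\<exists>p. smooth4 p \<and> MHD \<nu> \<eta> \<mu>0 \<rho>
    (\<lambda>t x y z. k * (- y) + C1 * E \<nu> t *
       (lift k l q1 t x y * cos (alpha k l t) - lift k l q2 t x y * sin (alpha k l t)))
    (\<lambda>t x y z. k * x + C1 * E \<nu> t *
       (lift k l q1 t x y * sin (alpha k l t) + lift k l q2 t x y * cos (alpha k l t)))
    (\<lambda>t x y z. 0)
    (\<lambda>t x y z. C2 * E \<eta> t *
       (lift k l q1 t x y * cos (alpha k l t) - lift k l q2 t x y * sin (alpha k l t)))
    (\<lambda>t x y z. C2 * E \<eta> t *
       (lift k l q1 t x y * sin (alpha k l t) + lift k l q2 t x y * cos (alpha k l t)))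
    (\<lambda>t x y z. 0) p"
proof -
  interpret rotating_solution "sg r * a1^2" q1 q2 q1X q1Y q2X q2Y q1XX q1XY q1YY "\<lambda>X Y. 0" q2XY q2YY
      stream k l C1 C2 \<nu> \<eta> \<mu>0 \<rho>
    using explicit_planar_profile assms(1)
    by (simp add: rotating_solution_def rotating_solution_axioms_def)
  have smooth: "smooth4 pressure"
    using elementary_smooth pressure_elementary explicit_profile_lifts_elementary by blast
  have fields: "vel1 = (\<lambda>t x y z. k * (- y) + C1 * E \<nu> t *
       (lift k l q1 t x y * cos (alpha k l t) - lift k l q2 t x y * sin (alpha k l t)))"
    "vel2 = (\<lambda>t x y z. k * x + C1 * E \<nu> t *
       (lift k l q1 t x y * sin (alpha k l t) + lift k l q2 t x y * cos (alpha k l t)))"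
    "mag1 = (\<lambda>t x y z. C2 * E \<eta> t *
       (lift k l q1 t x y * cos (alpha k l t) - lift k l q2 t x y * sin (alpha k l t)))"
    "mag2 = (\<lambda>t x y z. C2 * E \<eta> t *
       (lift k l q1 t x y * sin (alpha k l t) + lift k l q2 t x y * cos (alpha k l t)))"
    unfolding comp1_def comp2_def E_def by (simp_all add: fun_eq_iff mult_ac)
  show ?thesis
    using smooth mhd_solution unfolding fields by blast
qed

end

theorem mainTheorem7:
  fixes \<nu> \<eta> \<mu>0 \<rho> k l a1 a2 C1 C2 a b c b1 c1 :: real and r :: nat
  assumes "\<nu> > 0" and "\<eta> > 0" and "\<mu>0 > 0" and "\<rho> > 0"
    and "r = 0 \<or> r = 1"
  defines "WW1 \<equiv> (\<lambda>t x y. W1 r a1 a2 a b c b1 c1 (bigX k l t x y) (bigY k l t x y))"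
    and "WW2 \<equiv> (\<lambda>t x y. W2 r a1 a2 a b c (bigX k l t x y) (bigY k l t x y))"
  defines "u \<equiv> (\<lambda>t x y z. k * (- y) + C1 * exp ((-1) ^ r * \<nu> * a1\<^sup>2 * t) *
                 (WW1 t x y * cos (alpha k l t) - WW2 t x y * sin (alpha k l t)))"
    and "v \<equiv> (\<lambda>t x y z. k * x + C1 * exp ((-1) ^ r * \<nu> * a1\<^sup>2 * t) *
                 (WW1 t x y * sin (alpha k l t) + WW2 t x y * cos (alpha k l t)))"
    and "w \<equiv> (\<lambda>t x y z. 0 :: real)"
    and "H1 \<equiv> (\<lambda>t x y z. C2 * exp ((-1) ^ r * \<eta> * a1\<^sup>2 * t) *
                 (WW1 t x y * cos (alpha k l t) - WW2 t x y * sin (alpha k l t)))"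
    and "H2 \<equiv> (\<lambda>t x y z. C2 * exp ((-1) ^ r * \<eta> * a1\<^sup>2 * t) *
                 (WW1 t x y * sin (alpha k l t) + WW2 t x y * cos (alpha k l t)))"
    and "H3 \<equiv> (\<lambda>t x y z. 0 :: real)"
  shows "\<exists>p. smooth4 p \<and> MHD \<nu> \<eta> \<mu>0 \<rho> u v w H1 H2 H3 p"
proof -
  have sign: "(-1) ^ r = sg r"
    using assms(5) by (auto simp: sg_def)
  show ?thesis
    unfolding u_def v_def w_def H1_def H2_def H3_def WW1_def WW2_def sign
    by (rule explicit_solution[unfolded q1_def q2_def lift_def]) (use assms(4) in simp)
qed

end
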